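(* Let $O$ be Haar distributed on $\mathbb O(n)$ and $T_{p,q}=\sum_{i\le p,\,j\le q}O_{ij}^2$. There is a constant $C$ such that for all $n\ge2$ and all $1\le p,q\le n$, $$|\kappa_4(T_{p,q})|\le C\,\frac{p^2q^2}{n^4},$$ where $\kappa_4$ denotes the fourth classical cumulant. *)

theory Defs
  imports "HOL-Probability.Probability"
begin

text \<open>n x n real matrices are represented as functions nat => nat => real,
  only the entries with indices < n being relevant (0-based indexing).\<close>

definition orthogonal_mat :: "nat \<Rightarrow> (nat \<Rightarrow> nat \<Rightarrow> real) \<Rightarrow> bool" where
  "orthogonal_mat n U \<longleftrightarrow>
     (\<forall>i<n. \<forall>j<n. (\<Sum>k<n. U k i * U k j) = (if i = j then 1 else 0))"

definition mat_mult :: "nat \<Rightarrow> (nat \<Rightarrow> nat \<Rightarrow> real) \<Rightarrow> (nat \<Rightarrow> nat \<Rightarrow> real) \<Rightarrow> (nat \<Rightarrow> nat \<Rightarrow> real)" where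
  "mat_mult n A B = (\<lambda>i j. \<Sum>k<n. A i k * B k j)"

definition mat_entries :: "nat \<Rightarrow> (nat \<Rightarrow> nat \<Rightarrow> real) \<Rightarrow> (nat \<times> nat \<Rightarrow> real)" where
  "mat_entries n A = (\<lambda>ij\<in>{..<n} \<times> {..<n}. A (fst ij) (snd ij))"

definition mat_space :: "nat \<Rightarrow> (nat \<times> nat \<Rightarrow> real) measure" where
  "mat_space n = PiM ({..<n} \<times> {..<n}) (\<lambda>_. borel)"

definition haar_orthogonal :: "nat \<Rightarrow> (nat \<Rightarrow> nat \<Rightarrow> real) measure \<Rightarrow> bool" where
  "haar_orthogonal n \<mu> \<longleftrightarrow>
     prob_space \<mu> \<and>
     (\<forall>i j. (\<lambda>A. A i j) \<in> borel_measurable \<mu>) \<and>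
     (AE A in \<mu>. orthogonal_mat n A) \<and>
     (\<forall>U. orthogonal_mat n U \<longrightarrow>
        distr \<mu> (mat_space n) (\<lambda>A. mat_entries n (mat_mult n U A))
          = distr \<mu> (mat_space n) (\<lambda>A. mat_entries n A))"

definition raw_moment :: "'a measure \<Rightarrow> ('a \<Rightarrow> real) \<Rightarrow> nat \<Rightarrow> real" where
  "raw_moment M X k = (\<integral>\<omega>. X \<omega> ^ k \<partial>M)"

definition cumulant4 :: "'a measure \<Rightarrow> ('a \<Rightarrow> real) \<Rightarrow> real" where
  "cumulant4 M X =
     raw_moment M X 4 - 4 * raw_moment M X 3 * raw_moment M X 1
     - 3 * (raw_moment M X 2)^2 + 12 * raw_moment M X 2 * (raw_moment M X 1)^2
     - 6 * (raw_moment M X 1)^4"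

end

theory Submission
  imports Defs "Jordan_Normal_Form.Determinant"
begin

text \<open>Since \<open>|\<kappa>\<^sub>4(T)| \<le> 2 E (T - E T)\<^sup>4\<close> and \<open>E T = pq/n\<close>, it
  suffices to bound the fourth moment of \<open>T - E T = \<Sum>\<^sub>i\<^sub><\<^sub>p W\<^sub>i\<close>, where
  \<open>W\<^sub>i = \<Sum>\<^sub>j\<^sub><\<^sub>q O\<^sub>i\<^sub>j\<^sup>2 - q/n\<close>.  The \<open>W\<^sub>i\<close> (\<open>i < n\<close>) sum to zero and are exchangeable under
  row permutations; a general inequality for such sums gives
  \<open>E (\<Sum>\<^sub>i\<^sub><\<^sub>p W\<^sub>i)\<^sup>4 \<le> 64 p\<^sup>2 max E W\<^sub>i\<^sup>4\<close>.  The same inequality applied within a row to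
  \<open>O\<^sub>i\<^sub>j\<^sup>2 - 1/n\<close>, which are exchangeable under column permutations, gives
  \<open>E W\<^sub>i\<^sup>4 \<le> 64 q\<^sup>2 \<cdot> O(n\<^sup>-\<^sup>4)\<close>, because \<open>E O\<^sub>i\<^sub>j\<^sup>8 = O(n\<^sup>-\<^sup>4)\<close>.\<close>

section \<open>Orthogonal matrices\<close>

text \<open>A square matrix with orthonormal columns also has orthonormal rows.  This is
  the only place where linear algebra (a one-sided inverse is two-sided) is needed.\<close>

lemma orthogonal_mat_transpose:
  assumes "Defs.orthogonal_mat n A"
  shows "Defs.orthogonal_mat n (\<lambda>i j. A j i)"
proof -
  define M :: "real mat" where "M = mat n n (\<lambda>(i,j). A i j)"
  have M: "M \<in> carrier_mat n n" unfolding M_def by auto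
  have MT: "transpose_mat M \<in> carrier_mat n n" using M by auto
  have "transpose_mat M * M = 1\<^sub>m n"
  proof (rule eq_matI)
    fix i j assume ij: "i < dim_row (1\<^sub>m n)" "j < dim_col (1\<^sub>m n)"
    then have "(transpose_mat M * M) $$ (i,j) = (\<Sum>k<n. A k i * A k j)"
      unfolding M_def by (auto simp: scalar_prod_def atLeast0LessThan intro!: sum.cong)
    also have "\<dots> = 1\<^sub>m n $$ (i,j)" using assms ij unfolding Defs.orthogonal_mat_def by auto
    finally show "(transpose_mat M * M) $$ (i,j) = 1\<^sub>m n $$ (i,j)" .
  qed (use M in auto)
  then have MMT: "M * transpose_mat M = 1\<^sub>m n" by (rule mat_mult_left_right_inverse[OF MT M])
  show ?thesis unfolding Defs.orthogonal_mat_def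
  proof (intro allI impI)
    fix i j assume ij: "i < n" "j < n"
    have "(\<Sum>k<n. A i k * A j k) = (M * transpose_mat M) $$ (i,j)"
      using ij unfolding M_def by (auto simp: scalar_prod_def atLeast0LessThan intro!: sum.cong)
    also have "\<dots> = (if i = j then 1 else 0)" using ij MMT by auto
    finally show "(\<Sum>k<n. A i k * A j k) = (if i = j then 1 else 0)" .
  qed
qed

lemma orthogonal_mat_col_norm:
  assumes "Defs.orthogonal_mat n A" "j < n"
  shows "(\<Sum>i<n. A i j ^ 2) = 1"
  using assms unfolding Defs.orthogonal_mat_def by (simp add: power2_eq_square)

lemma orthogonal_mat_row_norm:
  assumes "Defs.orthogonal_mat n A" "i < n"
  shows "(\<Sum>j<n. A i j ^ 2) = 1"
  using orthogonal_mat_col_norm[OF orthogonal_mat_transpose[OF assms(1)] assms(2)] .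

lemma orthogonal_mat_entry_bound:
  assumes "Defs.orthogonal_mat n A" "i < n" "j < n"
  shows "\<bar>A i j\<bar> \<le> 1"
proof -
  have "A i j ^ 2 \<le> (\<Sum>k<n. A k j ^ 2)"
    by (rule member_le_sum) (use assms in auto)
  then have "A i j ^ 2 \<le> 1 ^ 2" using orthogonal_mat_col_norm[OF assms(1,3)] by simp
  then show ?thesis using abs_le_square_iff[of "A i j" 1] by simp
qed

definition perm_mat :: "(nat \<Rightarrow> nat) \<Rightarrow> nat \<Rightarrow> nat \<Rightarrow> real" where
  "perm_mat \<sigma> i k = (if k = \<sigma> i then 1 else 0)"

definition sign_mat :: "nat \<Rightarrow> nat \<Rightarrow> nat \<Rightarrow> real" where
  "sign_mat r i k = (if i = k then (if i = r then -1 else 1) else 0)"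

definition rotation_mat :: "nat \<Rightarrow> nat \<Rightarrow> real" where
  "rotation_mat i k =
     (if i = 0 then (if k = 0 \<or> k = 1 then 1 / sqrt 2 else 0)
      else if i = 1 then (if k = 0 then - 1 / sqrt 2 else if k = 1 then 1 / sqrt 2 else 0)
      else if i = k then 1 else 0)"

lemma sum_delta_both:
  assumes "i < n" "j < (n::nat)"
  shows "(\<Sum>k<n. if k = i \<and> k = j then 1 else 0::real) = (if i = j then 1 else 0)"
proof (cases "i = j")
  case True
  then show ?thesis using assms by (simp add: sum.delta)
qed (auto intro!: sum.neutral)

lemma orthogonal_perm_mat:
  assumes s: "\<sigma> permutes {..<n}"
  shows "Defs.orthogonal_mat n (perm_mat \<sigma>)"
  unfolding Defs.orthogonal_mat_def
proof (intro allI impI)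
  fix i j assume ij: "i < n" "j < n"
  let ?\<delta> = "\<lambda>k. if k = i \<and> k = j then 1 else 0::real"
  have "(\<Sum>k<n. perm_mat \<sigma> k i * perm_mat \<sigma> k j) = (\<Sum>k<n. ?\<delta> (\<sigma> k))"
    unfolding perm_mat_def by (intro sum.cong) auto
  also have "\<dots> = (\<Sum>k<n. ?\<delta> k)"
    using sum.permute[OF s, of ?\<delta>] by (simp add: comp_def)
  finally show "(\<Sum>k<n. perm_mat \<sigma> k i * perm_mat \<sigma> k j) = (if i = j then 1 else 0)"
    using sum_delta_both[OF ij] by simp
qed

lemma mat_mult_perm_mat:
  assumes "\<sigma> permutes {..<n}" "i < n"
  shows "Defs.mat_mult n (perm_mat \<sigma>) A i j = A (\<sigma> i) j"
proof -
  have "\<sigma> i < n" using assms by (meson lessThan_iff permutes_in_image)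
  have "Defs.mat_mult n (perm_mat \<sigma>) A i j = (\<Sum>k<n. if k = \<sigma> i then A k j else 0)"
    unfolding Defs.mat_mult_def perm_mat_def by (intro sum.cong) auto
  also have "\<dots> = A (\<sigma> i) j" using \<open>\<sigma> i < n\<close> by (simp add: sum.delta)
  finally show ?thesis .
qed

lemma orthogonal_sign_mat: "Defs.orthogonal_mat n (sign_mat r)"
  unfolding Defs.orthogonal_mat_def
proof (intro allI impI)
  fix i j assume ij: "i < n" "j < n"
  have "(\<Sum>k<n. sign_mat r k i * sign_mat r k j) = (\<Sum>k<n. if k = i \<and> k = j then 1 else 0::real)"
    unfolding sign_mat_def by (intro sum.cong) auto
  then show "(\<Sum>k<n. sign_mat r k i * sign_mat r k j) = (if i = j then 1 else 0)"
    using sum_delta_both[OF ij] by simp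
qed

lemma mat_mult_sign_mat:
  assumes "i < n"
  shows "Defs.mat_mult n (sign_mat r) A i j = (if i = r then - A i j else A i j)"
proof -
  have "Defs.mat_mult n (sign_mat r) A i j = (\<Sum>k<n. if k = i then (if i = r then - A k j else A k j) else 0)"
    unfolding Defs.mat_mult_def sign_mat_def by (intro sum.cong) auto
  also have "\<dots> = (if i = r then - A i j else A i j)" using assms by (simp add: sum.delta')
  finally show ?thesis .
qed

lemma sum_split_first_two: "2 \<le> (n::nat) \<Longrightarrow> (\<Sum>k<n. f k) = f 0 + f 1 + (\<Sum>k\<in>{2..<n}. f k)"
proof -
  assume "2 \<le> n"
  then have "{..<n} = insert 0 (insert 1 {2..<n})" by auto
  then show ?thesis by (simp add: add.assoc)
qed

lemma orthogonal_rotation_mat: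
  assumes n2: "2 \<le> n"
  shows "Defs.orthogonal_mat n rotation_mat"
  unfolding Defs.orthogonal_mat_def
proof (intro allI impI)
  fix i j assume ij: "i < n" "j < n"
  have half: "1 / sqrt 2 * (1 / sqrt 2) = (1/2 :: real)" by (simp add: real_sqrt_mult[symmetric])
  have "(\<Sum>k\<in>{2..<n}. rotation_mat k i * rotation_mat k j)
          = (\<Sum>k\<in>{2..<n}. if k = i \<and> k = j then 1 else 0)"
    unfolding rotation_mat_def by (intro sum.cong) auto
  also have "\<dots> = (if i = j \<and> 2 \<le> i then 1 else 0)"
    using ij by (cases "i = j") (auto intro!: sum.neutral)
  finally show "(\<Sum>k<n. rotation_mat k i * rotation_mat k j) = (if i = j then 1 else 0)"
    unfolding sum_split_first_two[OF n2] using half by (auto simp: rotation_mat_def)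
qed

lemma mat_mult_rotation_mat:
  assumes n2: "2 \<le> n" and i: "i < n"
  shows "Defs.mat_mult n rotation_mat A i j =
           (if i = 0 then (A 0 j + A 1 j) / sqrt 2
            else if i = 1 then (A 1 j - A 0 j) / sqrt 2 else A i j)"
proof -
  have "(\<Sum>k\<in>{2..<n}. rotation_mat i k * A k j) = (\<Sum>k\<in>{2..<n}. if k = i then A k j else 0)"
    unfolding rotation_mat_def by (intro sum.cong) auto
  also have "\<dots> = (if 2 \<le> i then A i j else 0)" using i by (simp add: sum.delta')
  finally have rest: "(\<Sum>k\<in>{2..<n}. rotation_mat i k * A k j) = (if 2 \<le> i then A i j else 0)" .
  show ?thesis
    unfolding Defs.mat_mult_def sum_split_first_two[OF n2] rest
    by (auto simp: rotation_mat_def field_simps)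
qed

text \<open>A random matrix is a function \<open>nat \<Rightarrow> nat \<Rightarrow> real\<close>; only its \<open>n \<times> n\<close> block is
  seen by the measure \<open>mat_space n\<close>.  The statistics considered below depend only on
  that block, and are Borel functions of it.\<close>

definition mat_of_entries :: "(nat \<times> nat \<Rightarrow> real) \<Rightarrow> nat \<Rightarrow> nat \<Rightarrow> real" where
  "mat_of_entries x = (\<lambda>i j. x (i, j))"

definition block_local :: "nat \<Rightarrow> ((nat \<Rightarrow> nat \<Rightarrow> real) \<Rightarrow> 'b) \<Rightarrow> bool" where
  "block_local n F \<longleftrightarrow> (\<forall>A B. (\<forall>i<n. \<forall>j<n. A i j = B i j) \<longrightarrow> F A = F B)"

lemma block_local_cong:
  "block_local n F \<Longrightarrow> (\<And>i j. i < n \<Longrightarrow> j < n \<Longrightarrow> A i j = B i j) \<Longrightarrow> F A = F B"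
  unfolding block_local_def by blast

lemma block_local_mat_of_entries:
  "block_local n F \<Longrightarrow> F (mat_of_entries (mat_entries n A)) = F A"
  by (erule block_local_cong) (simp add: mat_of_entries_def mat_entries_def)

lemma block_local_binop:
  "block_local n F \<Longrightarrow> block_local n G \<Longrightarrow> block_local n (\<lambda>A. H (F A) (G A))"
  unfolding block_local_def by metis

lemma mat_entries_measurable:
  assumes "\<And>i j. i < n \<Longrightarrow> j < n \<Longrightarrow> (\<lambda>x. f x i j) \<in> borel_measurable N"
  shows "(\<lambda>x. mat_entries n (f x)) \<in> N \<rightarrow>\<^sub>M mat_space n"
  unfolding mat_entries_def mat_space_def
  by (rule measurable_restrict) (use assms in auto)

lemma mat_space_entry_measurable:
  "i < n \<Longrightarrow> j < n \<Longrightarrow> (\<lambda>x. x (i, j)) \<in> borel_measurable (mat_space n)"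
  unfolding mat_space_def by (rule measurable_component_singleton) auto

lemma block_local_measurable_compose:
  assumes L: "block_local n G" and M: "(\<lambda>x. G (mat_of_entries x)) \<in> borel_measurable (mat_space n)"
    and P: "\<And>i j. i < n \<Longrightarrow> j < n \<Longrightarrow> (\<lambda>x. \<phi> x i j) \<in> borel_measurable N"
  shows "(\<lambda>x. G (\<phi> x)) \<in> borel_measurable N"
proof -
  have "(\<lambda>x. mat_entries n (\<phi> x)) \<in> N \<rightarrow>\<^sub>M mat_space n" by (rule mat_entries_measurable) (rule P)
  from measurable_compose[OF this M] show ?thesis using block_local_mat_of_entries[OF L] by simp
qed

lemma power_sum_div_sqrt2:
  fixes x y :: real
  shows "((x + y) / sqrt 2) ^ (2 * k) = (x + y) ^ (2 * k) / 2 ^ k"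
  by (simp add: power_divide power_mult)

lemma rotated_power_expansions:
  fixes x y :: real
  shows "((x + y) / sqrt 2) ^ 4 = (x^4 + 4*(x^3*y) + 6*(x^2*y^2) + 4*(x*y^3) + y^4) / 4"
    and "((x + y) / sqrt 2) ^ 6 =
           (x^6 + 6*(x^5*y) + 15*(x^4*y^2) + 20*(x^3*y^3) + 15*(x^2*y^4) + 6*(x*y^5) + y^6) / 8"
    and "((x + y) / sqrt 2) ^ 8 =
           (x^8 + 8*(x^7*y) + 28*(x^6*y^2) + 56*(x^5*y^3) + 70*(x^4*y^4) + 56*(x^3*y^5)
            + 28*(x^2*y^6) + 8*(x*y^7) + y^8) / 16"
proof -
  have "((x + y) / sqrt 2) ^ 4 = (x + y) ^ 4 / 4" using power_sum_div_sqrt2[of x y 2] by simp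
  also have "(x + y) ^ 4 = x^4 + 4*(x^3*y) + 6*(x^2*y^2) + 4*(x*y^3) + y^4"
    by (simp add: eval_nat_numeral algebra_simps)
  finally show "((x + y) / sqrt 2) ^ 4 = (x^4 + 4*(x^3*y) + 6*(x^2*y^2) + 4*(x*y^3) + y^4) / 4" .
  have "((x + y) / sqrt 2) ^ 6 = (x + y) ^ 6 / 8" using power_sum_div_sqrt2[of x y 3] by simp
  also have "(x + y) ^ 6 = x^6 + 6*(x^5*y) + 15*(x^4*y^2) + 20*(x^3*y^3) + 15*(x^2*y^4) + 6*(x*y^5) + y^6"
    by (simp add: eval_nat_numeral algebra_simps)
  finally show "((x + y) / sqrt 2) ^ 6 =
           (x^6 + 6*(x^5*y) + 15*(x^4*y^2) + 20*(x^3*y^3) + 15*(x^2*y^4) + 6*(x*y^5) + y^6) / 8" .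
  have "((x + y) / sqrt 2) ^ 8 = (x + y) ^ 8 / 16" using power_sum_div_sqrt2[of x y 4] by simp
  also have "(x + y) ^ 8 = x^8 + 8*(x^7*y) + 28*(x^6*y^2) + 56*(x^5*y^3) + 70*(x^4*y^4)
                           + 56*(x^3*y^5) + 28*(x^2*y^6) + 8*(x*y^7) + y^8"
    by (simp add: eval_nat_numeral algebra_simps)
  finally show "((x + y) / sqrt 2) ^ 8 =
           (x^8 + 8*(x^7*y) + 28*(x^6*y^2) + 56*(x^5*y^3) + 70*(x^4*y^4) + 56*(x^3*y^5)
            + 28*(x^2*y^6) + 8*(x*y^7) + y^8) / 16" .
qed

text \<open>Adding one summand \<open>w\<close> to a partial sum \<open>s\<close> of \<open>p \<ge> 1\<close> terms: apart from the cross term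
  \<open>4 s\<^sup>3 w\<close> (whose expectation will be non-positive), the fourth power grows by a factor
  \<open>1 + 1/(2p)\<close> plus a multiple of \<open>w\<^sup>4\<close>.\<close>

lemma fourth_power_increment_bound:
  fixes s w p :: real
  assumes p: "1 \<le> p"
  shows "(s + w) ^ 4 \<le> (1 + 1 / (2 * p)) * s ^ 4 + 4 * (s ^ 3 * w) + (32 * p + 3) * w ^ 4"
proof -
  have expand: "(s + w) ^ 4 = s^4 + 4*(s^3*w) + 6*(s^2*w^2) + 4*(s*w^3) + w^4"
    by (simp add: eval_nat_numeral algebra_simps)
  have sq1: "2*w^2*(s-w)^2 = 2*(s^2*w^2) - 4*(s*w^3) + 2*w^4"
    by (simp add: eval_nat_numeral algebra_simps)
  have sq2: "(s^2 - 8*p*w^2)^2 / (2*p) = s^4/(2*p) - 8*(s^2*w^2) + 32*p*w^4"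
    using p by (simp add: field_simps eval_nat_numeral)
  have nonneg1: "0 \<le> 2*w^2*(s-w)^2" and nonneg2: "0 \<le> (s^2 - 8*p*w^2)^2 / (2*p)"
    using p by simp_all
  have distrib: "(1 + 1 / (2 * p)) * s ^ 4 = s^4 + s^4/(2*p)" "(32 * p + 3) * w ^ 4 = 32*p*w^4 + 3 * w^4"
    by (simp_all add: algebra_simps)
  show ?thesis unfolding expand distrib using nonneg1 nonneg2 unfolding sq1 sq2 by linarith
qed

lemma fourth_power_diff_le: "((a::real) - b) ^ 4 \<le> 8 * (a ^ 4 + b ^ 4)"
proof -
  have h: "(a - b) ^ 2 \<le> 2 * (a ^ 2 + b ^ 2)"
    using zero_le_power2[of "a + b"] by (simp add: power2_eq_square algebra_simps)
  have "(a - b) ^ 4 = ((a - b) ^ 2) ^ 2" by (simp flip: power_mult)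
  also have "\<dots> \<le> (2 * (a ^ 2 + b ^ 2)) ^ 2" by (rule power_mono[OF h]) simp
  also have "\<dots> \<le> 8 * (a ^ 4 + b ^ 4)"
    using zero_le_power2[of "a^2 - b^2"] by (simp add: power2_eq_square algebra_simps eval_nat_numeral)
  finally show ?thesis .
qed

section \<open>The fourth cumulant of a bounded random variable\<close>

lemma (in prob_space) bounded_centered_power_integrable:
  fixes X :: "'a \<Rightarrow> real"
  assumes X: "X \<in> borel_measurable M" and bnd: "AE x in M. \<bar>X x\<bar> \<le> B"
  shows "integrable M (\<lambda>x. (X x - c) ^ k)"
proof (rule integrable_const_bound[where B="(B + \<bar>c\<bar>) ^ k"])
  show "AE x in M. norm ((X x - c) ^ k) \<le> (B + \<bar>c\<bar>) ^ k"
    using bnd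
  proof eventually_elim
    case (elim x)
    then have "\<bar>X x - c\<bar> \<le> B + \<bar>c\<bar>" by linarith
    then show ?case by (simp add: power_abs power_mono)
  qed
qed (use X in measurable)

lemma (in prob_space) cumulant4_eq_central_moments:
  fixes X :: "'a \<Rightarrow> real"
  assumes X: "X \<in> borel_measurable M" and bnd: "AE x in M. \<bar>X x\<bar> \<le> B"
  defines "m \<equiv> \<integral>x. X x \<partial>M"
  shows "cumulant4 M X = (\<integral>x. (X x - m) ^ 4 \<partial>M) - 3 * (\<integral>x. (X x - m) ^ 2 \<partial>M) ^ 2"
proof -
  define Y where "Y x = X x - m" for x
  define s where "s k = (\<integral>x. Y x ^ k \<partial>M)" for k
  have intY: "integrable M (\<lambda>x. Y x ^ k)" for k
    unfolding Y_def by (rule bounded_centered_power_integrable[OF X bnd])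
  note intY1 = intY[of 1, simplified]
  have "integrable M X" using Bochner_Integration.integrable_add[OF intY1 integrable_const[of m]] by (simp add: Y_def)
  then have s1: "s 1 = 0" unfolding s_def Y_def m_def by (simp add: prob_space)
  have raw: "raw_moment M X k = (\<integral>x. (Y x + m) ^ k \<partial>M)" for k
    unfolding raw_moment_def Y_def by simp
  have r1: "raw_moment M X 1 = s 1 + m"
    unfolding raw s_def using intY1 by (simp add: prob_space)
  have r2: "raw_moment M X 2 = s 2 + 2 * m * s 1 + m^2"
  proof -
    have "\<And>x. (Y x + m) ^ 2 = Y x ^ 2 + 2 * m * Y x + m ^ 2" by (simp add: power2_eq_square algebra_simps)
    then show ?thesis unfolding raw s_def using intY intY1 by (simp add: prob_space)
  qed
  have r3: "raw_moment M X 3 = s 3 + 3 * m * s 2 + 3 * m^2 * s 1 + m^3"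
  proof -
    have "\<And>x. (Y x + m) ^ 3 = Y x ^ 3 + 3 * m * Y x ^ 2 + 3 * m^2 * Y x + m ^ 3"
      by (simp add: eval_nat_numeral algebra_simps)
    then show ?thesis unfolding raw s_def using intY intY1 by (simp add: prob_space)
  qed
  have r4: "raw_moment M X 4 = s 4 + 4 * m * s 3 + 6 * m^2 * s 2 + 4 * m^3 * s 1 + m^4"
  proof -
    have "\<And>x. (Y x + m) ^ 4 = Y x ^ 4 + 4 * m * Y x ^ 3 + 6 * m^2 * Y x ^ 2 + 4 * m^3 * Y x + m ^ 4"
      by (simp add: eval_nat_numeral algebra_simps)
    then show ?thesis unfolding raw s_def using intY intY1 by (simp add: prob_space)
  qed
  have "cumulant4 M X = s 4 - 3 * (s 2)^2"
    unfolding cumulant4_def r1 r2 r3 r4 s1 by (simp add: algebra_simps power2_eq_square eval_nat_numeral)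
  then show ?thesis unfolding s_def Y_def .
qed

text \<open>Since \<open>0 \<le> s\<^sub>2\<^sup>2 \<le> s\<^sub>4\<close>, the fourth cumulant is controlled by the fourth central moment.\<close>

lemma (in prob_space) abs_cumulant4_le_central_moment:
  fixes X :: "'a \<Rightarrow> real"
  assumes X: "X \<in> borel_measurable M" and bnd: "AE x in M. \<bar>X x\<bar> \<le> B"
  shows "\<bar>cumulant4 M X\<bar> \<le> 2 * (\<integral>x. (X x - (\<integral>y. X y \<partial>M)) ^ 4 \<partial>M)"
proof -
  define m where "m = (\<integral>y. X y \<partial>M)"
  define s2 where "s2 = (\<integral>x. (X x - m) ^ 2 \<partial>M)"
  define s4 where "s4 = (\<integral>x. (X x - m) ^ 4 \<partial>M)"
  note int = bounded_centered_power_integrable[OF X bnd, of m]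
  have cum: "cumulant4 M X = s4 - 3 * s2 ^ 2"
    unfolding s2_def s4_def m_def by (rule cumulant4_eq_central_moments[OF X bnd])
  have s4_nonneg: "0 \<le> s4" unfolding s4_def
    by (rule Bochner_Integration.integral_nonneg) (simp add: zero_le_even_power)
  have "0 \<le> (\<integral>x. ((X x - m) ^ 2 - s2) ^ 2 \<partial>M)" by (rule Bochner_Integration.integral_nonneg) simp
  also have "\<dots> = s4 - 2 * s2 * s2 + s2 ^ 2"
  proof -
    have "\<And>x. ((X x - m) ^ 2 - s2) ^ 2 = (X x - m) ^ 4 - 2 * s2 * (X x - m) ^ 2 + s2 ^ 2"
      by (simp add: eval_nat_numeral algebra_simps)
    then show ?thesis unfolding s4_def using int by (simp add: prob_space flip: s2_def)
  qed
  finally have "s2 ^ 2 \<le> s4" by (simp add: power2_eq_square)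
  then show ?thesis unfolding cum m_def[symmetric] s4_def[symmetric]
    using s4_nonneg zero_le_power2[of s2] by linarith
qed

section \<open>Fourth moments of exchangeable sums with vanishing total\<close>

text \<open>The terms \<open>W\<^sub>0, \<dots>, W\<^sub>N\<^sub>-\<^sub>1\<close> sum to zero almost surely and are exchangeable in the weak
  sense that, given the first \<open>p\<close> terms, every later term has the same mixed moment with
  the cube of their sum.  Then the \<open>p\<close>-th partial sum has fourth moment \<open>O(p\<^sup>2)\<close> times a
  bound on the fourth moments of the terms, as for independent centred variables.\<close>

locale zero_sum_exchangeable = prob_space M for M :: "'a measure" +
  fixes N :: nat and W :: "nat \<Rightarrow> 'a \<Rightarrow> real"
  assumes integrable_partial_sum4: "\<And>p. p \<le> N \<Longrightarrow> integrable M (\<lambda>x. (\<Sum>j<p. W j x) ^ 4)"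
    and integrable_cross: "\<And>p i. p < N \<Longrightarrow> i < N \<Longrightarrow> integrable M (\<lambda>x. (\<Sum>j<p. W j x) ^ 3 * W i x)"
    and integrable_term4: "\<And>i. i < N \<Longrightarrow> integrable M (\<lambda>x. W i x ^ 4)"
    and zero_sum: "AE x in M. (\<Sum>j<N. W j x) = 0"
    and exchange: "\<And>p i. p \<le> i \<Longrightarrow> i < N \<Longrightarrow>
       (\<integral>x. (\<Sum>j<p. W j x) ^ 3 * W i x \<partial>M) = (\<integral>x. (\<Sum>j<p. W j x) ^ 3 * W p x \<partial>M)"
begin

text \<open>The remaining terms sum to minus the partial sum \<open>S\<^sub>p\<close>; by exchangeability each of
  them contributes equally, so \<open>(N - p) E(S\<^sub>p\<^sup>3 W\<^sub>p) = - E S\<^sub>p\<^sup>4 \<le> 0\<close>.\<close>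

lemma cross_moment_nonpos:
  assumes pN: "p < N"
  shows "(\<integral>x. (\<Sum>j<p. W j x) ^ 3 * W p x \<partial>M) \<le> 0"
proof -
  define S where "S x = (\<Sum>j<p. W j x)" for x
  define g where "g = (\<integral>x. S x ^ 3 * W p x \<partial>M)"
  have int_cross: "\<And>i. i \<in> {p..<N} \<Longrightarrow> integrable M (\<lambda>x. S x ^ 3 * W i x)"
    using integrable_cross pN unfolding S_def by simp
  have rest: "(\<Sum>i\<in>{p..<N}. S x ^ 3 * W i x) = - (S x ^ 4)"
    if "(\<Sum>j<N. W j x) = 0" for x
  proof -
    have "(\<Sum>j<N. W j x) = S x + (\<Sum>i\<in>{p..<N}. W i x)"
      using sum.atLeastLessThan_concat[of 0 p N "\<lambda>j. W j x"] pN by (simp add: atLeast0LessThan S_def)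
    then have "(\<Sum>i\<in>{p..<N}. W i x) = - S x" using that by simp
    then show ?thesis by (simp add: sum_distrib_left[symmetric] eval_nat_numeral)
  qed
  have "(\<Sum>i\<in>{p..<N}. (\<integral>x. S x ^ 3 * W i x \<partial>M)) = (\<integral>x. (\<Sum>i\<in>{p..<N}. S x ^ 3 * W i x) \<partial>M)"
    by (rule Bochner_Integration.integral_sum[symmetric]) (rule int_cross)
  also have "\<dots> = (\<integral>x. - (S x ^ 4) \<partial>M)"
  proof (rule integral_cong_AE)
    show "AE x in M. (\<Sum>i\<in>{p..<N}. S x ^ 3 * W i x) = - (S x ^ 4)"
      using zero_sum by eventually_elim (rule rest)
    show "(\<lambda>x. \<Sum>i\<in>{p..<N}. S x ^ 3 * W i x) \<in> borel_measurable M"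
      using int_cross by (intro borel_measurable_integrable Bochner_Integration.integrable_sum) auto
    show "(\<lambda>x. - (S x ^ 4)) \<in> borel_measurable M"
      using integrable_partial_sum4[of p] pN unfolding S_def
      by (intro borel_measurable_uminus borel_measurable_integrable) simp
  qed
  also have "\<dots> \<le> 0" by (simp add: zero_le_even_power)
  finally have total: "(\<Sum>i\<in>{p..<N}. (\<integral>x. S x ^ 3 * W i x \<partial>M)) \<le> 0" .
  have "(\<Sum>i\<in>{p..<N}. (\<integral>x. S x ^ 3 * W i x \<partial>M)) = (\<Sum>i\<in>{p..<N}. g)"
    unfolding S_def g_def by (rule sum.cong[OF refl]) (rule exchange; simp)
  also have "\<dots> = real (N - p) * g" by simp
  finally have "(\<Sum>i\<in>{p..<N}. (\<integral>x. S x ^ 3 * W i x \<partial>M)) = real (N - p) * g" .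
  with total pN have "real (N - p) * g \<le> 0" "real (N - p) > 0" by simp_all
  then show ?thesis unfolding g_def S_def by (simp add: mult_le_0_iff)
qed

text \<open>One step of the induction: adding the term \<open>W\<^sub>p\<close> multiplies the fourth moment by at
  most \<open>1 + 1/(2p)\<close>, up to a multiple of \<open>E W\<^sub>p\<^sup>4\<close>; the cross term is non-positive.\<close>

lemma partial_sum_fourth_moment_step:
  assumes pN: "p < N" and p1: "1 \<le> real p"
  shows "(\<integral>x. (\<Sum>j<Suc p. W j x) ^ 4 \<partial>M)
           \<le> (1 + 1 / (2 * real p)) * (\<integral>x. (\<Sum>j<p. W j x) ^ 4 \<partial>M) + (32 * real p + 3) * (\<integral>x. W p x ^ 4 \<partial>M)"
proof -
  define S where "S x = (\<Sum>j<p. W j x)" for x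
  have int: "integrable M (\<lambda>x. S x ^ 4)" "integrable M (\<lambda>x. S x ^ 3 * W p x)" "integrable M (\<lambda>x. W p x ^ 4)"
    using integrable_partial_sum4[of p] integrable_cross[of p p] integrable_term4[of p] pN
    unfolding S_def by simp_all
  have "(\<integral>x. (\<Sum>j<Suc p. W j x) ^ 4 \<partial>M) = (\<integral>x. (S x + W p x) ^ 4 \<partial>M)"
    unfolding S_def by simp
  also have "\<dots> \<le> (\<integral>x. (1 + 1 / (2 * real p)) * S x ^ 4 + 4 * (S x ^ 3 * W p x)
                     + (32 * real p + 3) * W p x ^ 4 \<partial>M)"
  proof (rule integral_mono)
    show "integrable M (\<lambda>x. (S x + W p x) ^ 4)"
      using integrable_partial_sum4[of "Suc p"] pN unfolding S_def by (simp add: add.commute)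
  qed (use int in simp, rule fourth_power_increment_bound[OF p1])
  also have "\<dots> = (1 + 1 / (2 * real p)) * (\<integral>x. S x ^ 4 \<partial>M) + 4 * (\<integral>x. S x ^ 3 * W p x \<partial>M)
                    + (32 * real p + 3) * (\<integral>x. W p x ^ 4 \<partial>M)"
    using int by simp
  also have "\<dots> \<le> (1 + 1 / (2 * real p)) * (\<integral>x. S x ^ 4 \<partial>M) + (32 * real p + 3) * (\<integral>x. W p x ^ 4 \<partial>M)"
    using cross_moment_nonpos[OF pN] unfolding S_def by simp
  finally show ?thesis unfolding S_def .
qed

lemma partial_sum_fourth_moment:
  assumes term4: "\<And>i. i < N \<Longrightarrow> (\<integral>x. W i x ^ 4 \<partial>M) \<le> m" and "p \<le> N"
  shows "(\<integral>x. (\<Sum>j<p. W j x) ^ 4 \<partial>M) \<le> 64 * real p ^ 2 * m"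
  using \<open>p \<le> N\<close>
proof (induction p)
  case 0
  show ?case by simp
next
  case (Suc p)
  have pN: "p < N" using Suc by simp
  define f where "f = (\<integral>x. (\<Sum>j<p. W j x) ^ 4 \<partial>M)"
  define w where "w = (\<integral>x. W p x ^ 4 \<partial>M)"
  have IH: "f \<le> 64 * real p ^ 2 * m" using Suc unfolding f_def by simp
  have w0: "0 \<le> w" unfolding w_def
    by (rule Bochner_Integration.integral_nonneg) (simp add: zero_le_even_power)
  have wm: "w \<le> m" unfolding w_def using term4 pN by simp
  show ?case
  proof (cases "p = 0")
    case True
    then show ?thesis using term4[of 0] pN w0 wm by simp
  next
    case False
    then have p1: "1 \<le> real p" by simp
    have "(\<integral>x. (\<Sum>j<Suc p. W j x) ^ 4 \<partial>M) \<le> (1 + 1 / (2 * real p)) * f + (32 * real p + 3) * w"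
      unfolding f_def w_def by (rule partial_sum_fourth_moment_step[OF pN p1])
    also have "\<dots> \<le> (1 + 1 / (2 * real p)) * (64 * real p ^ 2 * m) + (32 * real p + 3) * m"
      using p1 by (intro add_mono mult_left_mono IH wm) simp_all
    also have "\<dots> = (64 * real p ^ 2 + 64 * real p + 3) * m"
      using p1 by (simp add: field_simps power2_eq_square)
    also have "\<dots> \<le> 64 * real (Suc p) ^ 2 * m"
      using w0 wm by (intro mult_right_mono) (auto simp: power2_eq_square algebra_simps)
    finally show ?thesis .
  qed
qed

end

section \<open>Invariance properties of the Haar measure\<close>

locale haar_matrix =
  fixes n :: nat and \<mu> :: "(nat \<Rightarrow> nat \<Rightarrow> real) measure"
  assumes haar: "haar_orthogonal n \<mu>"
begin

sublocale prob_space \<mu>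
  using haar unfolding haar_orthogonal_def by simp

lemma entry_measurable[measurable]: "(\<lambda>A. A i j) \<in> borel_measurable \<mu>"
  using haar unfolding haar_orthogonal_def by simp

lemma AE_orthogonal: "AE A in \<mu>. Defs.orthogonal_mat n A"
  using haar unfolding haar_orthogonal_def by simp

lemma integral_left_mult:
  fixes F :: "(nat \<Rightarrow> nat \<Rightarrow> real) \<Rightarrow> real"
  assumes U: "Defs.orthogonal_mat n U" and L: "block_local n F"
    and M: "(\<lambda>x. F (mat_of_entries x)) \<in> borel_measurable (mat_space n)"
  shows "(\<integral>A. F (Defs.mat_mult n U A) \<partial>\<mu>) = (\<integral>A. F A \<partial>\<mu>)"
proof -
  let ?h = "\<lambda>x. F (mat_of_entries x)"
  have mUA: "(\<lambda>A. mat_entries n (Defs.mat_mult n U A)) \<in> \<mu> \<rightarrow>\<^sub>M mat_space n"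
    by (rule mat_entries_measurable) (auto simp: Defs.mat_mult_def)
  have mA: "(\<lambda>A. mat_entries n A) \<in> \<mu> \<rightarrow>\<^sub>M mat_space n"
    by (rule mat_entries_measurable) auto
  have law: "distr \<mu> (mat_space n) (\<lambda>A. mat_entries n (Defs.mat_mult n U A))
           = distr \<mu> (mat_space n) (\<lambda>A. mat_entries n A)"
    using haar U unfolding haar_orthogonal_def by blast
  have "(\<integral>A. F (Defs.mat_mult n U A) \<partial>\<mu>) = (\<integral>A. ?h (mat_entries n (Defs.mat_mult n U A)) \<partial>\<mu>)"
    using block_local_mat_of_entries[OF L] by simp
  also have "\<dots> = integral\<^sup>L (distr \<mu> (mat_space n) (\<lambda>A. mat_entries n (Defs.mat_mult n U A))) ?h"
    by (rule integral_distr[symmetric, OF mUA M])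
  also have "\<dots> = (\<integral>A. ?h (mat_entries n A) \<partial>\<mu>)" unfolding law by (rule integral_distr[OF mA M])
  also have "\<dots> = (\<integral>A. F A \<partial>\<mu>)" using block_local_mat_of_entries[OF L] by simp
  finally show ?thesis .
qed

text \<open>Invariance under transposition (and with it right invariance) follows by Fubini:
  for independent Haar matrices \<open>A, B\<close>, left invariance in \<open>A\<close> gives \<open>E F(B\<^sup>T A) = E F(A)\<close>,
  and left invariance in \<open>B\<close>, applied to \<open>F(B\<^sup>T A) = F((A\<^sup>T B)\<^sup>T)\<close>, gives \<open>E F(A\<^sup>T)\<close>.  The
  statistic must be bounded for Fubini to apply.\<close>

lemma integral_transpose:
  fixes F :: "(nat \<Rightarrow> nat \<Rightarrow> real) \<Rightarrow> real"
  assumes L: "block_local n F"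
    and M: "(\<lambda>x. F (mat_of_entries x)) \<in> borel_measurable (mat_space n)"
    and bounded: "\<And>X. \<bar>F X\<bar> \<le> K"
  shows "(\<integral>A. F A \<partial>\<mu>) = (\<integral>A. F (\<lambda>i j. A j i) \<partial>\<mu>)"
proof -
  interpret pair: pair_prob_space \<mu> \<mu> by unfold_locales
  define f where "f A B = F (Defs.mat_mult n (\<lambda>i j. B j i) A)" for A B
  define G where "G X = F (\<lambda>i j. X j i)" for X
  have LG: "block_local n G" using L unfolding block_local_def G_def by auto
  have MG: "(\<lambda>x. G (mat_of_entries x)) \<in> borel_measurable (mat_space n)"
    unfolding G_def mat_of_entries_def
    by (rule block_local_measurable_compose[OF L M]) (auto intro: mat_space_entry_measurable)
  have mf: "(\<lambda>(x, y). f x y) \<in> borel_measurable (\<mu> \<Otimes>\<^sub>M \<mu>)"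
    unfolding f_def case_prod_beta
    by (rule block_local_measurable_compose[OF L M]) (unfold Defs.mat_mult_def, measurable)
  have int: "integrable (\<mu> \<Otimes>\<^sub>M \<mu>) (\<lambda>(x, y). f x y)"
    by (rule pair.P.integrable_const_bound[where B=K])
       (use mf bounded in \<open>auto simp: f_def split: prod.split\<close>)
  have mfy: "(\<lambda>y. \<integral>x. f x y \<partial>\<mu>) \<in> borel_measurable \<mu>"
  proof -
    have "(\<lambda>(y, x). f x y) \<in> borel_measurable (\<mu> \<Otimes>\<^sub>M \<mu>)"
      using measurable_compose[OF measurable_pair_swap' mf] by (simp add: case_prod_beta)
    then show ?thesis by (rule borel_measurable_lebesgue_integral)
  qed
  have mfx: "(\<lambda>x. \<integral>y. f x y \<partial>\<mu>) \<in> borel_measurable \<mu>"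
    using mf by (rule borel_measurable_lebesgue_integral)
  have "(\<integral>y. (\<integral>x. f x y \<partial>\<mu>) \<partial>\<mu>) = (\<integral>y. (\<integral>A. F A \<partial>\<mu>) \<partial>\<mu>)"
  proof (rule integral_cong_AE[OF mfy])
    show "AE y in \<mu>. (\<integral>x. f x y \<partial>\<mu>) = (\<integral>A. F A \<partial>\<mu>)"
      using AE_orthogonal
    proof eventually_elim
      case (elim y)
      show ?case unfolding f_def by (rule integral_left_mult[OF orthogonal_mat_transpose[OF elim] L M])
    qed
  qed simp
  also have "(\<integral>x. (\<integral>y. f x y \<partial>\<mu>) \<partial>\<mu>) = (\<integral>x. (\<integral>A. G A \<partial>\<mu>) \<partial>\<mu>)"
  proof (rule integral_cong_AE[OF mfx])
    show "AE x in \<mu>. (\<integral>y. f x y \<partial>\<mu>) = (\<integral>A. G A \<partial>\<mu>)"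
      using AE_orthogonal
    proof eventually_elim
      case (elim x)
      have "\<And>y. f x y = G (Defs.mat_mult n (\<lambda>i j. x j i) y)"
        unfolding f_def G_def Defs.mat_mult_def by (simp add: mult.commute)
      then show ?case using integral_left_mult[OF orthogonal_mat_transpose[OF elim] LG MG] by simp
    qed
  qed simp
  moreover have "(\<integral>y. (\<integral>x. f x y \<partial>\<mu>) \<partial>\<mu>) = (\<integral>x. (\<integral>y. f x y \<partial>\<mu>) \<partial>\<mu>)"
    by (rule pair.Fubini_integral[OF int])
  ultimately show ?thesis by (simp add: G_def prob_space)
qed

text \<open>The class of statistics for which all expectations below are taken: block-local
  Borel functions of the entries, bounded on matrices with entries in \<open>[-1, 1]\<close>
  (which contains every orthogonal matrix).\<close>

definition observable :: "((nat \<Rightarrow> nat \<Rightarrow> real) \<Rightarrow> real) \<Rightarrow> bool" where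
  "observable F \<longleftrightarrow> block_local n F \<and> (\<lambda>x. F (mat_of_entries x)) \<in> borel_measurable (mat_space n) \<and>
     (\<exists>K. \<forall>X. (\<forall>i<n. \<forall>j<n. \<bar>X i j\<bar> \<le> 1) \<longrightarrow> \<bar>F X\<bar> \<le> K)"

lemma observable_const[simp, intro!]: "observable (\<lambda>A. c)"
  unfolding observable_def block_local_def by auto

lemma observable_entry[simp, intro!]: "i < n \<Longrightarrow> j < n \<Longrightarrow> observable (\<lambda>A. A i j)"
  unfolding observable_def block_local_def mat_of_entries_def by (auto intro!: mat_space_entry_measurable)

lemma observable_add[simp, intro!]:
  assumes F: "observable F" and G: "observable G"
  shows "observable (\<lambda>A. F A + G A)"
proof -
  obtain K1 K2 where K: "\<And>X. (\<forall>i<n. \<forall>j<n. \<bar>X i j\<bar> \<le> 1) \<Longrightarrow> \<bar>F X\<bar> \<le> K1 \<and> \<bar>G X\<bar> \<le> K2"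
    using F G unfolding observable_def by meson
  have "\<bar>F X + G X\<bar> \<le> K1 + K2" if "\<forall>i<n. \<forall>j<n. \<bar>X i j\<bar> \<le> 1" for X
    using K[OF that] abs_triangle_ineq[of "F X" "G X"] by linarith
  with F G show ?thesis unfolding observable_def by (auto intro: block_local_binop[where H="(+)"])
qed

lemma observable_uminus[simp, intro!]: "observable F \<Longrightarrow> observable (\<lambda>A. - F A)"
  unfolding observable_def block_local_def by auto

lemma observable_diff[simp, intro!]: "observable F \<Longrightarrow> observable G \<Longrightarrow> observable (\<lambda>A. F A - G A)"
  using observable_add[of F "\<lambda>A. - G A"] observable_uminus[of G] by simp

lemma observable_mult[simp, intro!]:
  assumes F: "observable F" and G: "observable G"
  shows "observable (\<lambda>A. F A * G A)"
proof -
  obtain K1 K2 where K: "\<And>X. (\<forall>i<n. \<forall>j<n. \<bar>X i j\<bar> \<le> 1) \<Longrightarrow> \<bar>F X\<bar> \<le> K1 \<and> \<bar>G X\<bar> \<le> K2"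
    using F G unfolding observable_def by meson
  have "\<bar>F X * G X\<bar> \<le> K1 * K2" if "\<forall>i<n. \<forall>j<n. \<bar>X i j\<bar> \<le> 1" for X
    using K[OF that] by (auto simp: abs_mult intro!: mult_mono)
  with F G show ?thesis unfolding observable_def by (auto intro: block_local_binop[where H="(*)"])
qed

lemma observable_power[simp, intro!]: "observable F \<Longrightarrow> observable (\<lambda>A. F A ^ k)"
  by (induction k) auto

lemma observable_sum[intro!]:
  "finite S \<Longrightarrow> (\<And>i. i \<in> S \<Longrightarrow> observable (F i)) \<Longrightarrow> observable (\<lambda>A. \<Sum>i\<in>S. F i A)"
  by (induction S rule: finite_induct) auto

lemma observable_if_bounded:
  assumes "block_local n F" "(\<lambda>x. F (mat_of_entries x)) \<in> borel_measurable (mat_space n)"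
    and "\<And>X. \<bar>F X\<bar> \<le> K"
  shows "observable F"
  using assms unfolding observable_def by blast

lemma observable_measurable: "observable F \<Longrightarrow> F \<in> borel_measurable \<mu>"
  unfolding observable_def
  using block_local_measurable_compose[where \<phi>="\<lambda>A. A" and N=\<mu>] by auto

lemma observable_AE_bounded:
  assumes "observable F"
  obtains K where "AE A in \<mu>. \<bar>F A\<bar> \<le> K"
proof -
  obtain K where K: "\<And>X. (\<forall>i<n. \<forall>j<n. \<bar>X i j\<bar> \<le> 1) \<Longrightarrow> \<bar>F X\<bar> \<le> K"
    using assms unfolding observable_def by auto
  have "AE A in \<mu>. \<bar>F A\<bar> \<le> K"
    using AE_orthogonal by eventually_elim (auto intro!: K orthogonal_mat_entry_bound)
  then show ?thesis by (rule that)
qed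

lemma observable_integrable[simp]: "observable F \<Longrightarrow> integrable \<mu> F"
proof -
  assume P: "observable F"
  then obtain K where "AE A in \<mu>. \<bar>F A\<bar> \<le> K" by (rule observable_AE_bounded)
  then show ?thesis by (intro integrable_const_bound[where B=K] observable_measurable[OF P]) simp
qed

lemma integral_left_action:
  assumes U: "Defs.orthogonal_mat n U" and P: "observable F"
    and action: "\<And>A i j. i < n \<Longrightarrow> j < n \<Longrightarrow> Defs.mat_mult n U A i j = \<phi> A i j"
  shows "(\<integral>A. F (\<phi> A) \<partial>\<mu>) = (\<integral>A. F A \<partial>\<mu>)"
proof -
  have L: "block_local n F" and M: "(\<lambda>x. F (mat_of_entries x)) \<in> borel_measurable (mat_space n)"
    using P unfolding observable_def by auto
  have "F (Defs.mat_mult n U A) = F (\<phi> A)" for A by (rule block_local_cong[OF L]) (rule action)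
  with integral_left_mult[OF U L M] show ?thesis by simp
qed

lemma integral_row_permute:
  assumes "\<sigma> permutes {..<n}" "observable F"
  shows "(\<integral>A. F (\<lambda>i j. A (\<sigma> i) j) \<partial>\<mu>) = (\<integral>A. F A \<partial>\<mu>)"
  by (rule integral_left_action[OF orthogonal_perm_mat[OF assms(1)] assms(2)])
     (rule mat_mult_perm_mat[OF assms(1)])

lemma integral_row_sign:
  assumes "observable F"
  shows "(\<integral>A. F (\<lambda>i j. if i = r then - A i j else A i j) \<partial>\<mu>) = (\<integral>A. F A \<partial>\<mu>)"
  by (rule integral_left_action[OF orthogonal_sign_mat assms]) (rule mat_mult_sign_mat)

lemma integral_row_rotation:
  assumes "2 \<le> n" "observable F"
  shows "(\<integral>A. F (\<lambda>i j. if i = 0 then (A 0 j + A 1 j) / sqrt 2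
              else if i = 1 then (A 1 j - A 0 j) / sqrt 2 else A i j) \<partial>\<mu>) = (\<integral>A. F A \<partial>\<mu>)"
  by (rule integral_left_action[OF orthogonal_rotation_mat[OF assms(1)] assms(2)])
     (rule mat_mult_rotation_mat[OF assms(1)])

text \<open>Column permutations: truncate \<open>F\<close> to a globally bounded statistic (harmless, as
  orthogonal matrices have entries in \<open>[-1, 1]\<close>), then transpose, permute rows and
  transpose back.\<close>

lemma integral_col_permute:
  assumes s: "\<sigma> permutes {..<n}" and P: "observable F"
  shows "(\<integral>A. F (\<lambda>i j. A i (\<sigma> j)) \<partial>\<mu>) = (\<integral>A. F A \<partial>\<mu>)"
proof -
  have L: "block_local n F" and M: "(\<lambda>x. F (mat_of_entries x)) \<in> borel_measurable (mat_space n)"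
    using P unfolding observable_def by auto
  obtain K where K: "\<And>X. (\<forall>i<n. \<forall>j<n. \<bar>X i j\<bar> \<le> 1) \<Longrightarrow> \<bar>F X\<bar> \<le> K"
    using P unfolding observable_def by auto
  have \<sigma>_lt: "i < n \<Longrightarrow> \<sigma> i < n" for i using s by (meson lessThan_iff permutes_in_image)
  define Fc where "Fc X = F (\<lambda>i j. max (-1) (min 1 (X i j)))" for X
  define H where "H X = Fc (\<lambda>i j. X j i)" for X
  have Lc: "block_local n Fc" using L unfolding block_local_def Fc_def by auto
  have Mc: "(\<lambda>x. Fc (mat_of_entries x)) \<in> borel_measurable (mat_space n)"
    unfolding Fc_def mat_of_entries_def
    by (rule block_local_measurable_compose[OF L M]) (use mat_space_entry_measurable in measurable)
  have Kc: "\<bar>Fc X\<bar> \<le> K" for X unfolding Fc_def by (rule K) auto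
  have LH: "block_local n H" using Lc unfolding block_local_def H_def by auto
  have MH: "(\<lambda>x. H (mat_of_entries x)) \<in> borel_measurable (mat_space n)"
    unfolding H_def mat_of_entries_def
    by (rule block_local_measurable_compose[OF Lc Mc]) (auto intro: mat_space_entry_measurable)
  have PH: "observable H" by (rule observable_if_bounded[OF LH MH]) (unfold H_def, rule Kc)
  have LK: "block_local n (\<lambda>Y. H (\<lambda>i j. Y (\<sigma> i) j))"
    using LH \<sigma>_lt unfolding block_local_def by auto
  have MK: "(\<lambda>x. H (\<lambda>i j. mat_of_entries x (\<sigma> i) j)) \<in> borel_measurable (mat_space n)"
    unfolding mat_of_entries_def
    by (rule block_local_measurable_compose[OF LH MH]) (auto simp: \<sigma>_lt intro: mat_space_entry_measurable)
  have truncate: "AE A in \<mu>. F A = Fc A \<and> F (\<lambda>i j. A i (\<sigma> j)) = Fc (\<lambda>i j. A i (\<sigma> j))"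
    using AE_orthogonal
  proof eventually_elim
    case (elim A)
    have "i < n \<Longrightarrow> j < n \<Longrightarrow> \<bar>A i j\<bar> \<le> 1" for i j by (rule orthogonal_mat_entry_bound[OF elim])
    then show ?case unfolding Fc_def
      by (intro conjI block_local_cong[OF L]) (auto simp: \<sigma>_lt abs_le_iff)
  qed
  have "(\<lambda>A. F (\<lambda>i j. A i (\<sigma> j))) \<in> borel_measurable \<mu>"
    by (rule block_local_measurable_compose[OF L M]) simp
  moreover have "(\<lambda>A. Fc (\<lambda>i j. A i (\<sigma> j))) \<in> borel_measurable \<mu>"
    by (rule block_local_measurable_compose[OF Lc Mc]) simp
  ultimately have "(\<integral>A. F (\<lambda>i j. A i (\<sigma> j)) \<partial>\<mu>) = (\<integral>A. Fc (\<lambda>i j. A i (\<sigma> j)) \<partial>\<mu>)"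
    by (rule integral_cong_AE) (use truncate in auto)
  also have "\<dots> = (\<integral>A. H (\<lambda>i j. A j (\<sigma> i)) \<partial>\<mu>)" unfolding H_def by simp
  also have "\<dots> = (\<integral>A. H (\<lambda>i j. A (\<sigma> i) j) \<partial>\<mu>)"
    by (rule integral_transpose[OF LK MK, where K=K, symmetric]) (unfold H_def, rule Kc)
  also have "\<dots> = (\<integral>A. H A \<partial>\<mu>)" by (rule integral_row_permute[OF s PH])
  also have "\<dots> = (\<integral>A. Fc A \<partial>\<mu>)" unfolding H_def by (rule integral_transpose[OF Lc Mc Kc, symmetric])
  also have "\<dots> = (\<integral>A. F A \<partial>\<mu>)"
    by (rule integral_cong_AE)
       (use truncate block_local_measurable_compose[OF L M, where \<phi>="\<lambda>A. A"]
          block_local_measurable_compose[OF Lc Mc, where \<phi>="\<lambda>A. A"] in auto)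
  finally show ?thesis .
qed

section \<open>Moments of a single entry\<close>

text \<open>Mixed moments of the first two entries of column \<open>c\<close>.  Row symmetries give linear
  relations between them which determine \<open>E A\<^sub>0\<^sub>c\<^sup>2\<close>, \<open>E A\<^sub>0\<^sub>c\<^sup>4\<close>, \<open>E A\<^sub>0\<^sub>c\<^sup>6\<close> and bound \<open>E A\<^sub>0\<^sub>c\<^sup>8\<close>.\<close>

definition mixed_moment :: "nat \<Rightarrow> nat \<Rightarrow> nat \<Rightarrow> real" where
  "mixed_moment c a b = (\<integral>A. A 0 c ^ a * A 1 c ^ b \<partial>\<mu>)"

lemma mixed_moment_0: "mixed_moment c a 0 = (\<integral>A. A 0 c ^ a \<partial>\<mu>)"
  unfolding mixed_moment_def by simp

lemma mixed_moment_swap: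
  assumes "2 \<le> n" "c < n"
  shows "mixed_moment c a b = mixed_moment c b a"
  using integral_row_permute[OF permutes_swap_id[of 0 "{..<n}" 1], of "\<lambda>A. A 0 c ^ a * A 1 c ^ b"] assms
  unfolding mixed_moment_def by (simp add: mult.commute)

lemma mixed_moment_odd:
  assumes "2 \<le> n" "c < n" "odd b"
  shows "mixed_moment c a b = 0"
  using integral_row_sign[of "\<lambda>A. A 0 c ^ a * A 1 c ^ b" 1] assms
  unfolding mixed_moment_def by (simp add: power_minus_odd)

lemma mixed_moment_rotation:
  assumes "2 \<le> n" "c < n"
  shows "(\<integral>A. ((A 0 c + A 1 c) / sqrt 2) ^ k \<partial>\<mu>) = mixed_moment c k 0"
  using integral_row_rotation[OF assms(1), of "\<lambda>A. A 0 c ^ k"] assms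
  unfolding mixed_moment_0 by simp

text \<open>Multiplying by the column norm \<open>\<Sum>\<^sub>i A\<^sub>i\<^sub>c\<^sup>2 = 1\<close> and permuting rows \<open>1, \<dots>, n-1\<close>.\<close>

lemma mixed_moment_norm:
  assumes n2: "2 \<le> n" and c: "c < n"
  shows "mixed_moment c a 0 = mixed_moment c (a + 2) 0 + (real n - 1) * mixed_moment c a 2"
proof -
  have same: "(\<integral>A. A 0 c ^ a * A i c ^ 2 \<partial>\<mu>) = mixed_moment c a 2" if i: "i \<in> {1..<n}" for i
    using integral_row_permute[OF permutes_swap_id[of 1 "{..<n}" i], of "\<lambda>A. A 0 c ^ a * A 1 c ^ 2"]
      i n2 c unfolding mixed_moment_def by simp
  have "mixed_moment c a 0 = (\<integral>A. (\<Sum>i<n. A 0 c ^ a * A i c ^ 2) \<partial>\<mu>)"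
    unfolding mixed_moment_0
  proof (rule integral_cong_AE)
    show "AE A in \<mu>. A 0 c ^ a = (\<Sum>i<n. A 0 c ^ a * A i c ^ 2)"
      using AE_orthogonal
      by eventually_elim (simp add: orthogonal_mat_col_norm[OF _ c] flip: sum_distrib_left)
  qed (use n2 c in \<open>auto intro!: observable_measurable\<close>)
  also have "\<dots> = (\<Sum>i<n. (\<integral>A. A 0 c ^ a * A i c ^ 2 \<partial>\<mu>))"
    by (rule Bochner_Integration.integral_sum) (use n2 c in auto)
  also have "\<dots> = (\<integral>A. A 0 c ^ a * A 0 c ^ 2 \<partial>\<mu>) + (\<Sum>i\<in>{1..<n}. (\<integral>A. A 0 c ^ a * A i c ^ 2 \<partial>\<mu>))"
  proof -
    have "{..<n} = insert 0 {1..<n}" using n2 by auto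
    then show ?thesis by simp
  qed
  also have "(\<Sum>i\<in>{1..<n}. (\<integral>A. A 0 c ^ a * A i c ^ 2 \<partial>\<mu>)) = (real n - 1) * mixed_moment c a 2"
    using n2 by (simp add: same of_nat_diff)
  also have "(\<integral>A. A 0 c ^ a * A 0 c ^ 2 \<partial>\<mu>) = mixed_moment c (a + 2) 0"
    unfolding mixed_moment_0 by (simp only: power_add)
  finally show ?thesis .
qed

lemma mixed_moment_44_le:
  assumes "2 \<le> n" "c < n"
  shows "mixed_moment c 4 4 \<le> mixed_moment c 6 2"
proof -
  have "mixed_moment c 4 4 \<le> (\<integral>A. (A 0 c ^ 6 * A 1 c ^ 2 + A 0 c ^ 2 * A 1 c ^ 6) / 2 \<partial>\<mu>)"
    unfolding mixed_moment_def
  proof (rule integral_mono)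
    fix A :: "nat \<Rightarrow> nat \<Rightarrow> real"
    have "0 \<le> A 0 c ^ 2 * A 1 c ^ 2 * (A 0 c ^ 2 - A 1 c ^ 2) ^ 2" by simp
    then show "A 0 c ^ 4 * A 1 c ^ 4 \<le> (A 0 c ^ 6 * A 1 c ^ 2 + A 0 c ^ 2 * A 1 c ^ 6) / 2"
      by (simp add: eval_nat_numeral algebra_simps)
  qed (use assms in auto)
  also have "\<dots> = (mixed_moment c 6 2 + mixed_moment c 2 6) / 2"
    unfolding mixed_moment_def using assms by simp
  finally show ?thesis using mixed_moment_swap[OF assms, of 2 6] by simp
qed

lemma entry_moment_2:
  assumes "2 \<le> n" "c < n"
  shows "mixed_moment c 2 0 = 1 / real n"
proof -
  have "mixed_moment c 0 0 = 1" unfolding mixed_moment_0 by (simp add: prob_space)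
  then have "1 = mixed_moment c 2 0 + (real n - 1) * mixed_moment c 2 0"
    using mixed_moment_norm[OF assms, of 0, unfolded add_0] mixed_moment_swap[OF assms, of 0 2] by simp
  then have "real n * mixed_moment c 2 0 = 1" by (simp add: algebra_simps)
  then show ?thesis using assms by (simp add: field_simps)
qed

lemma entry_moment_4:
  assumes "2 \<le> n" "c < n"
  shows "mixed_moment c 4 0 = 3 / (real n * (real n + 2))"
proof -
  note P = mixed_moment_swap[OF assms] mixed_moment_odd[OF assms]
  have "mixed_moment c 4 0 = (mixed_moment c 4 0 + 4 * mixed_moment c 3 1 + 6 * mixed_moment c 2 2
          + 4 * mixed_moment c 1 3 + mixed_moment c 0 4) / 4"
    using mixed_moment_rotation[OF assms, of 4] assms
    unfolding rotated_power_expansions mixed_moment_def by simp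
  then have "mixed_moment c 4 0 = 3 * mixed_moment c 2 2" using P[of 0 4] P(2)[of 1] P(2)[of 3] by simp
  moreover have "mixed_moment c 2 0 = mixed_moment c 4 0 + (real n - 1) * mixed_moment c 2 2"
    using mixed_moment_norm[OF assms, of 2] by simp
  ultimately have "mixed_moment c 4 0 * (real n + 2) = 3 * mixed_moment c 2 0"
    by (simp add: algebra_simps)
  then have "mixed_moment c 4 0 * (real n * (real n + 2)) = 3"
    using entry_moment_2[OF assms] assms by (simp add: field_simps)
  moreover have "real n * (real n + 2) \<noteq> 0" using assms by simp
  ultimately show ?thesis by (simp add: eq_divide_eq)
qed

lemma entry_moment_6:
  assumes "2 \<le> n" "c < n"
  shows "mixed_moment c 6 0 = 5 * mixed_moment c 4 0 / (real n + 4)"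
proof -
  note P = mixed_moment_swap[OF assms] mixed_moment_odd[OF assms]
  have "mixed_moment c 6 0 = (mixed_moment c 6 0 + 6 * mixed_moment c 5 1 + 15 * mixed_moment c 4 2
          + 20 * mixed_moment c 3 3 + 15 * mixed_moment c 2 4 + 6 * mixed_moment c 1 5
          + mixed_moment c 0 6) / 8"
    using mixed_moment_rotation[OF assms, of 6] assms
    unfolding rotated_power_expansions mixed_moment_def by simp
  then have "mixed_moment c 6 0 = 5 * mixed_moment c 4 2"
    using P[of 0 6] P[of 2 4] P(2)[of 1] P(2)[of 3] P(2)[of 5] by simp
  moreover have "mixed_moment c 4 0 = mixed_moment c 6 0 + (real n - 1) * mixed_moment c 4 2"
    using mixed_moment_norm[OF assms, of 4] by simp
  ultimately have "mixed_moment c 6 0 * (real n + 4) = 5 * mixed_moment c 4 0"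
    by (simp add: algebra_simps)
  then show ?thesis using assms by (simp add: field_simps)
qed

lemma entry_moment_8:
  assumes "2 \<le> n" "c < n"
  shows "mixed_moment c 8 0 \<le> 9 * mixed_moment c 6 0 / (real n + 8)"
proof -
  note P = mixed_moment_swap[OF assms] mixed_moment_odd[OF assms]
  have "mixed_moment c 8 0 = (mixed_moment c 8 0 + 8 * mixed_moment c 7 1 + 28 * mixed_moment c 6 2
          + 56 * mixed_moment c 5 3 + 70 * mixed_moment c 4 4 + 56 * mixed_moment c 3 5
          + 28 * mixed_moment c 2 6 + 8 * mixed_moment c 1 7 + mixed_moment c 0 8) / 16"
    using mixed_moment_rotation[OF assms, of 8] assms
    unfolding rotated_power_expansions mixed_moment_def by simp
  then have "14 * mixed_moment c 8 0 = 56 * mixed_moment c 6 2 + 70 * mixed_moment c 4 4"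
    using P[of 0 8] P[of 2 6] P(2)[of 1] P(2)[of 3] P(2)[of 5] P(2)[of 7] by simp
  then have Q8: "mixed_moment c 8 0 \<le> 9 * mixed_moment c 6 2"
    using mixed_moment_44_le[OF assms] by simp
  have "mixed_moment c 6 0 = mixed_moment c 8 0 + (real n - 1) * mixed_moment c 6 2"
    using mixed_moment_norm[OF assms, of 6] by simp
  moreover have "(real n - 1) * (mixed_moment c 8 0 / 9) \<le> (real n - 1) * mixed_moment c 6 2"
    using Q8 assms by (intro mult_left_mono) auto
  ultimately have "mixed_moment c 8 0 * (real n + 8) \<le> 9 * mixed_moment c 6 0"
    by (simp add: field_simps)
  then show ?thesis by (simp add: field_simps)
qed

lemma entry_power_row_independent:
  assumes "i < n" "j < n"
  shows "(\<integral>A. A i j ^ k \<partial>\<mu>) = mixed_moment j k 0"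
  using integral_row_permute[OF permutes_swap_id[of 0 "{..<n}" i], of "\<lambda>A. A 0 j ^ k"] assms
  unfolding mixed_moment_0 by simp

lemma entry_second_moment:
  assumes "2 \<le> n" "i < n" "j < n"
  shows "(\<integral>A. A i j ^ 2 \<partial>\<mu>) = 1 / real n"
  using entry_power_row_independent[OF assms(2,3)] entry_moment_2[OF assms(1,3)] by simp

lemma entry_eighth_moment:
  assumes n2: "2 \<le> n" and ij: "i < n" "j < n"
  shows "(\<integral>A. A i j ^ 8 \<partial>\<mu>) \<le> 135 / real n ^ 4"
proof -
  have "(\<integral>A. A i j ^ 8 \<partial>\<mu>) \<le> 135 / (real n * (real n + 2) * (real n + 4) * (real n + 8))"
    using entry_power_row_independent[OF ij, of 8] entry_moment_8[OF n2 ij(2)]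
      entry_moment_6[OF n2 ij(2)] entry_moment_4[OF n2 ij(2)] n2
    by (simp add: field_simps)
  also have "\<dots> \<le> 135 / real n ^ 4"
  proof (rule divide_left_mono)
    have "real n ^ 4 = real n * real n * real n * real n" by (simp add: eval_nat_numeral)
    also have "\<dots> \<le> real n * (real n + 2) * (real n + 4) * (real n + 8)" by (intro mult_mono) auto
    finally show "real n ^ 4 \<le> real n * (real n + 2) * (real n + 4) * (real n + 8)" .
  qed (use n2 in auto)
  finally show ?thesis .
qed

lemma centred_square_fourth_moment:
  assumes n2: "2 \<le> n" and ij: "i < n" "j < n"
  shows "(\<integral>A. (A i j ^ 2 - 1 / real n) ^ 4 \<partial>\<mu>) \<le> 1088 / real n ^ 4"
proof -
  have "(\<integral>A. (A i j ^ 2 - 1 / real n) ^ 4 \<partial>\<mu>) \<le> (\<integral>A. 8 * (A i j ^ 8 + (1 / real n) ^ 4) \<partial>\<mu>)"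
  proof (rule integral_mono)
    fix A :: "nat \<Rightarrow> nat \<Rightarrow> real"
    show "(A i j ^ 2 - 1 / real n) ^ 4 \<le> 8 * (A i j ^ 8 + (1 / real n) ^ 4)"
      using fourth_power_diff_le[of "A i j ^ 2" "1 / real n"] by (simp flip: power_mult)
  qed (use ij in auto)
  also have "\<dots> = 8 * ((\<integral>A. A i j ^ 8 \<partial>\<mu>) + (1 / real n) ^ 4)"
    using ij by (simp add: prob_space)
  also have "\<dots> \<le> 8 * (135 / real n ^ 4 + (1 / real n) ^ 4)"
    using entry_eighth_moment[OF n2 ij] by simp
  also have "\<dots> = 1088 / real n ^ 4" by (simp add: field_simps)
  finally show ?thesis .
qed

section \<open>Fourth moments of the block statistic\<close>

lemma zero_sum_exchangeable_observables:
  assumes obs: "\<And>i. i < n \<Longrightarrow> observable (W i)"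
    and zero_sum: "AE A in \<mu>. (\<Sum>i<n. W i A) = 0"
    and exchange: "\<And>p i. p \<le> i \<Longrightarrow> i < n \<Longrightarrow>
       (\<integral>A. (\<Sum>j<p. W j A) ^ 3 * W i A \<partial>\<mu>) = (\<integral>A. (\<Sum>j<p. W j A) ^ 3 * W p A \<partial>\<mu>)"
  shows "zero_sum_exchangeable \<mu> n W"
proof -
  have partial: "observable (\<lambda>A. \<Sum>j<p. W j A)" if "p \<le> n" for p
    using obs that by (intro observable_sum) auto
  show ?thesis
  proof unfold_locales
    show "integrable \<mu> (\<lambda>A. (\<Sum>j<p. W j A) ^ 4)" if "p \<le> n" for p
      using partial[OF that] by simp
    show "integrable \<mu> (\<lambda>A. (\<Sum>j<p. W j A) ^ 3 * W i A)" if "p < n" "i < n" for p i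
      using partial[of p] obs[of i] that by simp
    show "integrable \<mu> (\<lambda>A. W i A ^ 4)" if "i < n" for i
      using obs[OF that] by simp
  qed (fact zero_sum, fact exchange)
qed

text \<open>Within one row, the centred squares \<open>A\<^sub>r\<^sub>j\<^sup>2 - 1/n\<close> sum to zero and are exchanged by
  column transpositions.\<close>

lemma row_deviation_fourth_moment:
  assumes n2: "2 \<le> n" and r: "r < n" and q: "q \<le> n"
  shows "(\<integral>A. (\<Sum>j<q. A r j ^ 2 - 1 / real n) ^ 4 \<partial>\<mu>) \<le> 64 * real q ^ 2 * (1088 / real n ^ 4)"
proof -
  define V :: "nat \<Rightarrow> (nat \<Rightarrow> nat \<Rightarrow> real) \<Rightarrow> real" where
    "V j A = A r j ^ 2 - 1 / real n" for j A
  have obs: "j < n \<Longrightarrow> observable (V j)" for j unfolding V_def using r by auto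
  have "zero_sum_exchangeable \<mu> n V"
  proof (rule zero_sum_exchangeable_observables[OF obs])
    show "AE A in \<mu>. (\<Sum>j<n. V j A) = 0"
      using AE_orthogonal
      by eventually_elim (use r n2 in \<open>simp add: V_def sum_subtractf orthogonal_mat_row_norm\<close>)
    show "(\<integral>A. (\<Sum>j<p. V j A) ^ 3 * V i A \<partial>\<mu>) = (\<integral>A. (\<Sum>j<p. V j A) ^ 3 * V p A \<partial>\<mu>)"
      if pi: "p \<le> i" "i < n" for p i
    proof -
      define \<sigma> where "\<sigma> = Transposition.transpose p i"
      have s: "\<sigma> permutes {..<n}" unfolding \<sigma>_def by (rule permutes_swap_id) (use pi in auto)
      have swapped: "(\<Sum>j<p. V j (\<lambda>a b. A a (\<sigma> b))) ^ 3 * V p (\<lambda>a b. A a (\<sigma> b))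
                       = (\<Sum>j<p. V j A) ^ 3 * V i A" for A
      proof -
        have "(\<Sum>j<p. V j (\<lambda>a b. A a (\<sigma> b))) = (\<Sum>j<p. V j A)"
          by (rule sum.cong[OF refl]) (use pi in \<open>auto simp: V_def \<sigma>_def\<close>)
        then show ?thesis by (simp add: V_def \<sigma>_def)
      qed
      have "observable (\<lambda>A. (\<Sum>j<p. V j A) ^ 3 * V p A)" using obs pi by auto
      from integral_col_permute[OF s this] show ?thesis unfolding swapped .
    qed
  qed
  moreover have "(\<integral>A. V j A ^ 4 \<partial>\<mu>) \<le> 1088 / real n ^ 4" if "j < n" for j
    unfolding V_def by (rule centred_square_fourth_moment[OF n2 r that])
  ultimately have "(\<integral>A. (\<Sum>j<q. V j A) ^ 4 \<partial>\<mu>) \<le> 64 * real q ^ 2 * (1088 / real n ^ 4)"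
    using q by (intro zero_sum_exchangeable.partial_sum_fourth_moment) auto
  then show ?thesis unfolding V_def .
qed

text \<open>The centred row sums \<open>\<Sum>\<^sub>j\<^sub><\<^sub>q A\<^sub>i\<^sub>j\<^sup>2 - q/n\<close> sum to zero over all rows and are
  exchanged by row transpositions.\<close>

lemma block_deviation_fourth_moment:
  assumes n2: "2 \<le> n" and p: "p \<le> n" and q: "q \<le> n"
  shows "(\<integral>A. (\<Sum>i<p. (\<Sum>j<q. A i j ^ 2) - real q / real n) ^ 4 \<partial>\<mu>)
           \<le> 64 * real p ^ 2 * (64 * real q ^ 2 * (1088 / real n ^ 4))"
proof -
  define W :: "nat \<Rightarrow> (nat \<Rightarrow> nat \<Rightarrow> real) \<Rightarrow> real" where
    "W i A = (\<Sum>j<q. A i j ^ 2) - real q / real n" for i A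
  have obs: "i < n \<Longrightarrow> observable (W i)" for i unfolding W_def using q by auto
  have "zero_sum_exchangeable \<mu> n W"
  proof (rule zero_sum_exchangeable_observables[OF obs])
    show "AE A in \<mu>. (\<Sum>i<n. W i A) = 0"
      using AE_orthogonal
    proof eventually_elim
      case (elim A)
      have "(\<Sum>i<n. W i A) = (\<Sum>j<q. \<Sum>i<n. A i j ^ 2) - real n * (real q / real n)"
        by (simp add: W_def sum_subtractf sum.swap[of _ "{..<n}"])
      also have "\<dots> = 0" using elim q n2 by (simp add: orthogonal_mat_col_norm)
      finally show ?case .
    qed
    show "(\<integral>A. (\<Sum>j<p. W j A) ^ 3 * W i A \<partial>\<mu>) = (\<integral>A. (\<Sum>j<p. W j A) ^ 3 * W p A \<partial>\<mu>)"
      if pi: "p \<le> i" "i < n" for p i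
    proof -
      define \<sigma> where "\<sigma> = Transposition.transpose p i"
      have s: "\<sigma> permutes {..<n}" unfolding \<sigma>_def by (rule permutes_swap_id) (use pi in auto)
      have swapped: "(\<Sum>j<p. W j (\<lambda>a b. A (\<sigma> a) b)) ^ 3 * W p (\<lambda>a b. A (\<sigma> a) b)
                       = (\<Sum>j<p. W j A) ^ 3 * W i A" for A
      proof -
        have "(\<Sum>j<p. W j (\<lambda>a b. A (\<sigma> a) b)) = (\<Sum>j<p. W j A)"
          by (rule sum.cong[OF refl]) (use pi in \<open>auto simp: W_def \<sigma>_def\<close>)
        then show ?thesis by (simp add: W_def \<sigma>_def)
      qed
      have "observable (\<lambda>A. (\<Sum>j<p. W j A) ^ 3 * W p A)" using obs pi by auto
      from integral_row_permute[OF s this] show ?thesis unfolding swapped .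
    qed
  qed
  moreover have "(\<integral>A. W i A ^ 4 \<partial>\<mu>) \<le> 64 * real q ^ 2 * (1088 / real n ^ 4)" if "i < n" for i
    using row_deviation_fourth_moment[OF n2 that q] by (simp add: W_def sum_subtractf)
  ultimately have "(\<integral>A. (\<Sum>i<p. W i A) ^ 4 \<partial>\<mu>) \<le> 64 * real p ^ 2 * (64 * real q ^ 2 * (1088 / real n ^ 4))"
    using p by (intro zero_sum_exchangeable.partial_sum_fourth_moment) auto
  then show ?thesis unfolding W_def .
qed

lemma block_mean:
  assumes "2 \<le> n" "p \<le> n" "q \<le> n"
  shows "(\<integral>A. (\<Sum>i<p. \<Sum>j<q. A i j ^ 2) \<partial>\<mu>) = real p * real q / real n"
proof -
  have "(\<integral>A. (\<Sum>i<p. \<Sum>j<q. A i j ^ 2) \<partial>\<mu>) = (\<Sum>i<p. (\<integral>A. (\<Sum>j<q. A i j ^ 2) \<partial>\<mu>))"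
    using assms by (intro Bochner_Integration.integral_sum observable_integrable observable_sum) auto
  also have "\<dots> = (\<Sum>i<p. \<Sum>j<q. (\<integral>A. A i j ^ 2 \<partial>\<mu>))"
    using assms by (intro sum.cong refl Bochner_Integration.integral_sum) auto
  also have "\<dots> = (\<Sum>i<p. \<Sum>j<q. 1 / real n)"
    using assms by (intro sum.cong refl entry_second_moment) auto
  finally show ?thesis by simp
qed

text \<open>The fourth cumulant of the block statistic \<open>T\<^sub>p\<^sub>,\<^sub>q\<close>: it is at most twice the fourth
  central moment, and \<open>T\<^sub>p\<^sub>,\<^sub>q - E T\<^sub>p\<^sub>,\<^sub>q\<close> is the sum of the centred row sums.\<close>

lemma cumulant4_block_bound:
  assumes n2: "2 \<le> n" and p: "p \<le> n" and q: "q \<le> n"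
  shows "\<bar>cumulant4 \<mu> (\<lambda>A. \<Sum>i<p. \<Sum>j<q. (A i j)^2)\<bar>
           \<le> 8912896 * (real p)^2 * (real q)^2 / (real n)^4"
proof -
  define T :: "(nat \<Rightarrow> nat \<Rightarrow> real) \<Rightarrow> real" where "T A = (\<Sum>i<p. \<Sum>j<q. (A i j)^2)" for A
  have obs: "observable T" unfolding T_def using p q by (intro observable_sum) auto
  obtain K where K: "AE A in \<mu>. \<bar>T A\<bar> \<le> K" using obs by (rule observable_AE_bounded)
  have centred: "T A - (\<integral>A. T A \<partial>\<mu>) = (\<Sum>i<p. (\<Sum>j<q. A i j ^ 2) - real q / real n)" for A
    using block_mean[OF assms] by (simp add: T_def sum_subtractf)
  have "\<bar>cumulant4 \<mu> T\<bar> \<le> 2 * (\<integral>A. (T A - (\<integral>A. T A \<partial>\<mu>)) ^ 4 \<partial>\<mu>)"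
    by (rule abs_cumulant4_le_central_moment[OF observable_measurable[OF obs] K])
  also have "\<dots> \<le> 2 * (64 * real p ^ 2 * (64 * real q ^ 2 * (1088 / real n ^ 4)))"
    unfolding centred using block_deviation_fourth_moment[OF assms] by simp
  finally show ?thesis unfolding T_def by simp
qed

end

theorem mainTheorem12:
  shows "\<exists>C::real. \<forall>n::nat. \<forall>p q :: nat. \<forall>\<mu>.
           2 \<le> n \<and> 1 \<le> p \<and> p \<le> n \<and> 1 \<le> q \<and> q \<le> n \<and> haar_orthogonal n \<mu> \<longrightarrow>
           \<bar>cumulant4 \<mu> (\<lambda>A. \<Sum>i<p. \<Sum>j<q. (A i j)^2)\<bar>
             \<le> C * (real p)^2 * (real q)^2 / (real n)^4"
proof (intro exI allI impI)
  fix n p q :: nat and \<mu> :: "(nat \<Rightarrow> nat \<Rightarrow> real) measure"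
  assume h: "2 \<le> n \<and> 1 \<le> p \<and> p \<le> n \<and> 1 \<le> q \<and> q \<le> n \<and> haar_orthogonal n \<mu>"
  then interpret haar_matrix n \<mu> by unfold_locales simp
  show "\<bar>cumulant4 \<mu> (\<lambda>A. \<Sum>i<p. \<Sum>j<q. (A i j)^2)\<bar>
          \<le> 8912896 * (real p)^2 * (real q)^2 / (real n)^4"
    using h by (intro cumulant4_block_bound) auto
qed

end
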